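(* For all nonnegative nonzero vectors $x,y\in\mathbb{R}^n$, $|\sin(x,y)|\le D(x,y)$.
   Context: $\sin(x,y)$ is the sine of the angle between $x$ and $y$, and $$D(x,y)=\frac{\left\|\frac{y}{\|y\|_1}-\frac{x}{\|x\|_1}\right\|_2}{\left\|\frac{y}{\|y\|_1}\right\|_2}.$$ *)

theory Defs
  imports "HOL-Analysis.Analysis"
begin

definition norm1 :: "real ^ 'n \<Rightarrow> real" where
  "norm1 x = (\<Sum>i\<in>UNIV. \<bar>x $ i\<bar>)"

definition vec_angle :: "real ^ 'n \<Rightarrow> real ^ 'n \<Rightarrow> real" where
  "vec_angle x y = arccos ((x \<bullet> y) / (norm x * norm y))"

definition sin_angle :: "real ^ 'n \<Rightarrow> real ^ 'n \<Rightarrow> real" where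
  "sin_angle x y = sin (vec_angle x y)"

definition Dist_rel :: "real ^ 'n \<Rightarrow> real ^ 'n \<Rightarrow> real" where
  "Dist_rel x y = norm ((1 / norm1 y) *\<^sub>R y - (1 / norm1 x) *\<^sub>R x) / norm ((1 / norm1 y) *\<^sub>R y)"

end

theory Submission
  imports Defs
begin

text \<open>The sine of the angle is invariant under positive rescaling of either vector, and
  \<open>\<parallel>v\<parallel> sin(u,v)\<close> is the distance from \<open>v\<close> to the line spanned by \<open>u\<close>, hence at most
  \<open>\<parallel>v - u\<parallel>\<close>. Taking \<open>u = x/\<parallel>x\<parallel>\<^sub>1\<close> and \<open>v = y/\<parallel>y\<parallel>\<^sub>1\<close> gives the claim.\<close>

lemma norm1_pos:
  fixes x :: "real ^ 'n"
  assumes "x \<noteq> 0"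
  shows "norm1 x > 0"
proof -
  obtain i where i: "x $ i \<noteq> 0" using assms by (metis vec_eq_iff zero_index)
  have "\<bar>x $ i\<bar> \<le> (\<Sum>j\<in>UNIV. \<bar>x $ j\<bar>)"
    by (rule member_le_sum) auto
  then show ?thesis using i unfolding norm1_def by linarith
qed

lemma abs_cos_angle_le_1:
  fixes x y :: "'a :: real_inner"
  shows "\<bar>(x \<bullet> y) / (norm x * norm y)\<bar> \<le> 1"
  using Cauchy_Schwarz_ineq2[of x y]
  by (cases "x = 0 \<or> y = 0") (auto simp: abs_div divide_le_eq_1)

text \<open>No nonzeroness is needed: if \<open>x = 0\<close> or \<open>y = 0\<close> the quotient is \<open>0\<close> (division by zero),
  so both sides equal \<open>1\<close>.\<close>
lemma sin_angle_eq_sqrt: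
  fixes x y :: "real ^ 'n"
  shows "sin_angle x y = sqrt (1 - ((x \<bullet> y) / (norm x * norm y))\<^sup>2)"
  unfolding sin_angle_def vec_angle_def
  using abs_cos_angle_le_1[of x y] by (simp only: sin_arccos_abs)

lemma sin_angle_nonneg:
  fixes x y :: "real ^ 'n"
  shows "sin_angle x y \<ge> 0"
  using abs_cos_angle_le_1[of x y]
  by (simp add: sin_angle_eq_sqrt abs_square_le_1 del: abs_divide)

lemma vec_angle_scaleR:
  fixes x y :: "real ^ 'n"
  assumes "a > 0" "b > 0"
  shows "vec_angle (a *\<^sub>R x) (b *\<^sub>R y) = vec_angle x y"
  using assms unfolding vec_angle_def by (simp add: field_simps)

lemma norm_mult_sin_angle_le_dist:
  fixes x y :: "real ^ 'n"
  shows "norm y * sin_angle x y \<le> norm (y - x)"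
proof (cases "x = 0")
  case True
  then show ?thesis by (simp add: sin_angle_eq_sqrt)
next
  case False
  define p where "p = x \<bullet> y"
  have nx: "norm x > 0" using False by simp
  have "(norm y * sin_angle x y)\<^sup>2 = (norm y)\<^sup>2 * (1 - (p / (norm x * norm y))\<^sup>2)"
    using abs_cos_angle_le_1[of x y]
    by (simp add: sin_angle_eq_sqrt p_def power_mult_distrib abs_square_le_1)
  also have "\<dots> = (norm y)\<^sup>2 - p\<^sup>2 / (norm x)\<^sup>2"
    using nx by (cases "y = 0") (simp_all add: p_def field_simps power2_eq_square)
  also have "\<dots> \<le> (norm y)\<^sup>2 - p\<^sup>2 / (norm x)\<^sup>2 + ((norm x)\<^sup>2 - p)\<^sup>2 / (norm x)\<^sup>2"
    by simp
  also have "\<dots> = (norm y)\<^sup>2 - 2 * p + (norm x)\<^sup>2"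
    using nx by (simp add: field_simps power2_eq_square)
  also have "\<dots> = (norm (y - x))\<^sup>2"
    by (simp add: p_def power2_norm_eq_inner inner_diff_left inner_diff_right inner_commute)
  finally show ?thesis
    by (meson norm_ge_zero power2_le_imp_le)
qed

theorem lemmaA3:
  fixes x y :: "real ^ 'n"
  assumes "\<forall>i. x $ i \<ge> 0" and "\<forall>i. y $ i \<ge> 0"
    and "x \<noteq> 0" and "y \<noteq> 0"
  shows "\<bar>sin_angle x y\<bar> \<le> Dist_rel x y"
proof -
  define u where "u = (1 / norm1 x) *\<^sub>R x"
  define v where "v = (1 / norm1 y) *\<^sub>R y"
  have "norm1 x > 0" "norm1 y > 0" using norm1_pos assms(3,4) by auto
  then have "sin_angle x y = sin_angle u v" and "v \<noteq> 0"
    using assms(4) by (simp_all add: sin_angle_def vec_angle_scaleR u_def v_def)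
  moreover have "norm v * sin_angle u v \<le> norm (v - u)"
    by (rule norm_mult_sin_angle_le_dist)
  ultimately show ?thesis
    unfolding Dist_rel_def u_def[symmetric] v_def[symmetric]
    by (simp add: sin_angle_nonneg field_simps)
qed

end
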